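(* Let $A\in\mathbb{R}^{n\times n}$, $b\in\mathbb{R}^n$, $x^0\in\mathbb{R}^n$. Suppose that the generalized Newton method $x^{k+1}=(A-D(x^k))^{-1}b$ is well defined for all $k\ge 0$ (i.e. every $A-D(x^k)$ is nonsingular) and that the sequence $\{x^k\}$ converges to some vector $x^*$. Then $x^*$ is a solution of $Ax-|x|=b$, and $x^k=x^*$ for all sufficiently large $k$. (No uniqueness of solutions of the equation is assumed.)
   Context: For $x\in\mathbb{R}^n$, $|x|$ is the componentwise absolute value, $\mathrm{sign}(x)$ is the vector whose components are $1,0,-1$ according as the corresponding component of $x$ is positive, zero, negative, and $D(x)=\mathrm{diag}(\mathrm{sign}(x))$. The generalized Newton method (GNM) for the absolute value equation $Ax-|x|=b$ is the iteration $x^{k+1}=(A-D(x^k))^{-1}b$, $k=0,1,\ldots$, from a given starting vector $x^0$. *)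

theory Defs
  imports "HOL-Analysis.Analysis"
begin

definition vabs :: "real ^ 'n \<Rightarrow> real ^ 'n" where
  "vabs x = (\<chi> i. \<bar>x $ i\<bar>)"

definition vsign :: "real ^ 'n \<Rightarrow> real ^ 'n" where
  "vsign x = (\<chi> i. sgn (x $ i))"

definition Dsign :: "real ^ 'n \<Rightarrow> real ^ 'n ^ 'n" where
  "Dsign x = (\<chi> i j. if i = j then vsign x $ i else 0)"

end

theory Submission
  imports Defs
begin

text \<open>
  Passing to the limit in \<open>(A - D(x\<^sup>k)) x\<^sup>k\<^sup>+\<^sup>1 = b\<close> gives the equation, because
  \<open>sgn(x\<^sup>k\<^sub>i) x\<^sup>k\<^sup>+\<^sup>1\<^sub>i = \<bar>x\<^sup>k\<^sub>i\<bar> + sgn(x\<^sup>k\<^sub>i) (x\<^sup>k\<^sup>+\<^sup>1\<^sub>i - x\<^sup>k\<^sub>i) \<longrightarrow> \<bar>x\<^sup>*\<^sub>i\<bar>\<close> even though \<open>sgn\<close>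
  is discontinuous. Finite termination holds because \<open>D(x\<^sup>k)\<close> ranges over the finitely
  many sign patterns, so every iterate after the first lies in a fixed finite set; a
  convergent sequence in a finite set is eventually equal to its limit.
\<close>

lemma tendsto_finite_values_eventually_eq:
  fixes X :: "'b \<Rightarrow> 'a::t1_space"
  assumes "finite S" and "\<forall>\<^sub>F k in F. X k \<in> S" and "(X \<longlongrightarrow> L) F"
  shows "\<forall>\<^sub>F k in F. X k = L"
proof -
  have "\<forall>\<^sub>F k in F. \<forall>y\<in>S - {L}. X k \<noteq> y"
    using assms(1,3) by (intro eventually_ball_finite ballI tendsto_imp_eventually_ne) auto
  with assms(2) show ?thesis
    by (rule eventually_elim2) blast
qed

lemma tendsto_sgn_mult_abs:
  fixes f g :: "'b \<Rightarrow> real"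
  assumes f: "(f \<longlongrightarrow> l) F" and g: "(g \<longlongrightarrow> l) F"
  shows "((\<lambda>k. sgn (f k) * g k) \<longlongrightarrow> \<bar>l\<bar>) F"
proof -
  have "((\<lambda>k. g k - f k) \<longlongrightarrow> 0) F"
    using tendsto_diff[OF g f] by simp
  moreover have "\<forall>\<^sub>F k in F. norm (sgn (f k) * (g k - f k)) \<le> \<bar>g k - f k\<bar>"
    by (rule always_eventually) (auto simp: abs_mult sgn_real_def)
  ultimately have "((\<lambda>k. sgn (f k) * (g k - f k)) \<longlongrightarrow> 0) F"
    by (rule Lim_null_comparison[OF _ tendsto_rabs_zero, rotated])
  then have "((\<lambda>k. \<bar>f k\<bar> + sgn (f k) * (g k - f k)) \<longlongrightarrow> \<bar>l\<bar> + 0) F"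
    by (rule tendsto_add[OF tendsto_rabs[OF f]])
  moreover have "\<bar>f k\<bar> + sgn (f k) * (g k - f k) = sgn (f k) * g k" for k
    by (simp add: algebra_simps sgn_mult_abs abs_sgn mult.commute)
  ultimately show ?thesis by simp
qed

lemma Dsign_mult_vec: "Dsign y *v z = (\<chi> i. sgn (y $ i) * z $ i)"
proof -
  have "(\<Sum>j\<in>UNIV. (if i = j then sgn (y $ i) else 0) * z $ j) = sgn (y $ i) * z $ i" for i
    by (simp add: if_distrib[of "\<lambda>t. t * _"] cong: if_cong)
  then show ?thesis
    unfolding Dsign_def vsign_def matrix_vector_mult_def vec_eq_iff
    by (simp only: vec_lambda_beta) simp
qed

lemma tendsto_Dsign_mult_vabs:
  assumes "(X \<longlongrightarrow> L) F" and "(Y \<longlongrightarrow> L) F"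
  shows "((\<lambda>k. Dsign (X k) *v Y k) \<longlongrightarrow> vabs L) F"
  unfolding Dsign_mult_vec vabs_def
  by (intro tendsto_vec_lambda tendsto_sgn_mult_abs tendsto_vec_nth assms)

lemma finite_range_vsign: "finite (range (vsign :: real ^ 'n \<Rightarrow> real ^ 'n))"
proof -
  let ?signs = "{f :: 'n \<Rightarrow> real. \<forall>i. (i \<in> UNIV \<longrightarrow> f i \<in> {-1, 0, 1}) \<and> (i \<notin> UNIV \<longrightarrow> f i = 0)}"
  have "finite ?signs"
    by (rule finite_set_of_finite_funs) auto
  moreover have "range (vsign :: real ^ 'n \<Rightarrow> real ^ 'n) \<subseteq> vec_lambda ` ?signs"
  proof
    fix v :: "real ^ 'n" assume "v \<in> range vsign"
    then obtain y where "v = vsign y" by auto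
    then show "v \<in> vec_lambda ` ?signs"
      unfolding vsign_def by (rule image_eqI[where x = "\<lambda>i. sgn (y $ i)"]) (auto simp: sgn_real_def)
  qed
  ultimately show ?thesis
    using finite_subset by blast
qed

lemma finite_range_Dsign: "finite (range (Dsign :: real ^ 'n \<Rightarrow> real ^ 'n ^ 'n))"
proof -
  have range_Dsign: "range Dsign = (\<lambda>s :: real ^ 'n. \<chi> i j. if i = j then s $ i else 0) ` range vsign"
    by (simp only: image_image Dsign_def[abs_def])
  show ?thesis
    unfolding range_Dsign by (rule finite_imageI[OF finite_range_vsign])
qed

lemma matrix_inv_right:
  assumes "invertible M"
  shows "M ** matrix_inv M = mat 1"
  using assms unfolding invertible_def matrix_inv_def by (rule someI_ex[THEN conjunct1])

lemma matrix_vector_mul_matrix_inv_right: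
  assumes "invertible M"
  shows "M *v (matrix_inv M *v y) = y"
  by (simp add: matrix_vector_mul_assoc matrix_inv_right[OF assms])

theorem corollary3p4:
  fixes A :: "real ^ 'n ^ 'n" and b :: "real ^ 'n"
    and x :: "nat \<Rightarrow> real ^ 'n" and xstar :: "real ^ 'n"
  assumes nonsing: "\<And>k. invertible (A - Dsign (x k))"
    and gnm: "\<And>k. x (Suc k) = matrix_inv (A - Dsign (x k)) *v b"
    and conv: "x \<longlonglongrightarrow> xstar"
  shows "A *v xstar - vabs xstar = b \<and> (\<exists>K. \<forall>k\<ge>K. x k = xstar)"
proof
  have step: "A *v x (Suc k) - Dsign (x k) *v x (Suc k) = b" for k
    using matrix_vector_mul_matrix_inv_right[OF nonsing[of k]] gnm[of k]
    by (simp add: matrix_vector_mult_diff_rdistrib)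
  have "(\<lambda>k. A *v x (Suc k) - Dsign (x k) *v x (Suc k)) \<longlonglongrightarrow> A *v xstar - vabs xstar"
    using LIMSEQ_Suc[OF conv]
    by (intro tendsto_diff bounded_linear.tendsto[OF matrix_vector_mul_bounded_linear]
        tendsto_Dsign_mult_vabs conv)
  then show "A *v xstar - vabs xstar = b"
    by (simp add: step LIMSEQ_const_iff)
next
  have "\<forall>\<^sub>F k in sequentially. x k \<in> (\<lambda>D. matrix_inv (A - D) *v b) ` range Dsign"
    using gnm by (simp flip: eventually_sequentially_Suc)
  then have "\<forall>\<^sub>F k in sequentially. x k = xstar"
    using finite_range_Dsign conv by (intro tendsto_finite_values_eventually_eq) auto
  then show "\<exists>K. \<forall>k\<ge>K. x k = xstar"
    by (simp add: eventually_sequentially)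
qed

end
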